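(* Let $r \geq 1$ be an integer. Call an $m \times n$ matrix $A$ with entries in $\{0,1\}$ a "good" group testing matrix if (1) for every $0$-$1$ vector $x \in \{0,1\}^n$ with at most $k=1$ nonzero entry, $x$ is uniquely determined by the Boolean test outcome vector $y \in \{0,1\}^m$ defined by $y_i = \max_{1 \le j \le n} A_{i,j} x_j$ (i.e. $y_i = 1$ if and only if some positive element $j$ has $A_{i,j}=1$), and (2) every row of $A$ contains at most $r$ entries equal to $1$. Then there exists a good group testing matrix with $m = r$ and $n = \frac{r(r+1)}{2}$, so that $\frac{n}{m} = \frac{r+1}{2}$. Moreover, there is no good group testing matrix of any dimension $m \times n$ with $\frac{n}{m} > \frac{r+1}{2}$.
   Context: Non-adaptive group testing: there are $n$ subjects and $m$ pooled tests, encoded by a $0$-$1$ pooling matrix $A$ with $A_{i,j}=1$ iff subject $j$'s sample is included in test $i$. A test is positive iff it contains at least one positive subject. "Correctly infer the status of each of the $n$ elements whenever there is at most one positive element" means the map from the set of status vectors with at most one positive entry to test outcome vectors is injective. The row constraint (at most $r$ ones per row) models the dilution constraint that at most $r$ samples can be pooled together. *)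

theory Defs
  imports Complex_Main
begin

text \<open>A 0-1 matrix of size m x n is represented by A :: nat => nat => bool, where
  A i j (for i < m, j < n) means the entry A_{i,j} equals 1. Entries outside the
  index range are irrelevant.\<close>

definition status_vectors :: "nat \<Rightarrow> (nat \<Rightarrow> bool) set" where
  "status_vectors n = {x. (\<forall>j. x j \<longrightarrow> j < n) \<and> card {j. x j} \<le> 1}"

definition outcome :: "nat \<Rightarrow> nat \<Rightarrow> (nat \<Rightarrow> nat \<Rightarrow> bool) \<Rightarrow> (nat \<Rightarrow> bool) \<Rightarrow> (nat \<Rightarrow> bool)" where
  "outcome m n A x = (\<lambda>i. i < m \<and> (\<exists>j<n. A i j \<and> x j))"

definition good_gt_matrix :: "nat \<Rightarrow> nat \<Rightarrow> nat \<Rightarrow> (nat \<Rightarrow> nat \<Rightarrow> bool) \<Rightarrow> bool" where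
  "good_gt_matrix r m n A \<longleftrightarrow>
     inj_on (outcome m n A) (status_vectors n) \<and>
     (\<forall>i<m. card {j. j < n \<and> A i j} \<le> r)"

end

theory Submission
  imports Defs
begin

text \<open>A matrix detects one positive element exactly when its column supports are nonempty and
  pairwise distinct, so good matrices with n columns are the same as families of n distinct
  nonempty subsets of the m tests in which every test lies in at most r members. For such a
  family, the members of size one are at most m in number and the others have size at least
  two; double counting the incidences against the row bound gives
  2n \<le> \<Sum>|S| + #{singletons} \<le> rm + m. The bound is attained by the family of all subsets of
  {0,..,r-1} of size one or two: there are r + r(r-1)/2 = r(r+1)/2 of them, and each test
  lies in {i} and in the r-1 pairs {i,k}.\<close>

definition col_support :: "nat \<Rightarrow> (nat \<Rightarrow> nat \<Rightarrow> bool) \<Rightarrow> nat \<Rightarrow> nat set" where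
  "col_support m A j = {i. i < m \<and> A i j}"

lemma status_vectors_eq: "status_vectors n = insert (\<lambda>_. False) ((\<lambda>j l. l = j) ` {..<n})"
proof (intro equalityI subsetI)
  fix x assume x: "x \<in> status_vectors n"
  then have "{j. x j} \<subseteq> {..<n}" and "card {j. x j} \<le> Suc 0"
    unfolding status_vectors_def by auto
  then have "\<forall>a\<in>{j. x j}. \<forall>b\<in>{j. x j}. a = b"
    using card_le_Suc0_iff_eq finite_subset by blast
  with \<open>{j. x j} \<subseteq> {..<n}\<close> show "x \<in> insert (\<lambda>_. False) ((\<lambda>j l. l = j) ` {..<n})"
  proof (cases "\<exists>j. x j")
    case True
    then obtain j where "x j" by blast
    with \<open>\<forall>a\<in>{j. x j}. \<forall>b\<in>{j. x j}. a = b\<close> have "x = (\<lambda>l. l = j)"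
      by (auto simp: fun_eq_iff)
    with \<open>x j\<close> \<open>{j. x j} \<subseteq> {..<n}\<close> show ?thesis by auto
  qed (auto simp: fun_eq_iff)
qed (auto simp: status_vectors_def)

lemma outcome_zero: "outcome m n A (\<lambda>_. False) = (\<lambda>_. False)"
  by (simp add: outcome_def)

lemma outcome_unit: "j < n \<Longrightarrow> outcome m n A (\<lambda>l. l = j) = (\<lambda>i. i \<in> col_support m A j)"
  by (auto simp: outcome_def col_support_def)

lemma inj_on_outcome_iff:
  "inj_on (outcome m n A) (status_vectors n) \<longleftrightarrow>
     inj_on (col_support m A) {..<n} \<and> (\<forall>j<n. col_support m A j \<noteq> {})"
proof -
  let ?e = "\<lambda>j l. l = j"
  have e_inj: "inj_on ?e {..<n}"
    by (auto simp: inj_on_def fun_eq_iff)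
  have "inj_on (outcome m n A) (?e ` {..<n}) \<longleftrightarrow> inj_on (outcome m n A \<circ> ?e) {..<n}"
    by (rule comp_inj_on_iff[OF e_inj])
  also have "\<dots> \<longleftrightarrow> inj_on (col_support m A) {..<n}"
    by (auto simp: inj_on_def outcome_unit fun_eq_iff set_eq_iff)
  finally have units: "inj_on (outcome m n A) (?e ` {..<n}) \<longleftrightarrow> inj_on (col_support m A) {..<n}" .
  have "(\<lambda>_. False) \<notin> ?e ` {..<n}"
    by (auto simp: fun_eq_iff)
  moreover have "(\<lambda>_. False) \<in> outcome m n A ` ?e ` {..<n} \<longleftrightarrow> (\<exists>j<n. col_support m A j = {})"
    by (auto simp: outcome_unit fun_eq_iff image_iff)
  ultimately show ?thesis
    unfolding status_vectors_eq using units by (auto simp: outcome_zero)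
qed

lemma good_gt_matrix_iff:
  "good_gt_matrix r m n A \<longleftrightarrow>
     inj_on (col_support m A) {..<n} \<and> (\<forall>j<n. col_support m A j \<noteq> {}) \<and>
     (\<forall>i<m. card {j. j < n \<and> A i j} \<le> r)"
  by (simp add: good_gt_matrix_def inj_on_outcome_iff)

lemma sum_card_eq_sum_degree:
  assumes "finite M" and "\<forall>S\<in>F. S \<subseteq> M"
  shows "(\<Sum>S\<in>F. card S) = (\<Sum>i\<in>M. card {S\<in>F. i \<in> S})"
proof -
  have fin: "finite F"
    using assms by (meson Pow_iff finite_Pow_iff finite_subset subsetI)
  have "{i\<in>M. i \<in> S} = S" if "S \<in> F" for S
    using that assms(2) by blast
  then have "(\<Sum>S\<in>F. card S) = (\<Sum>S\<in>F. \<Sum>i\<in>{i\<in>M. i \<in> S}. 1)"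
    by simp
  also have "\<dots> = (\<Sum>i\<in>M. \<Sum>S\<in>{S\<in>F. i \<in> S}. 1)"
    by (rule sum.swap_restrict[OF fin assms(1)])
  finally show ?thesis by simp
qed

lemma card_family_of_nonempty_subsets_le:
  assumes "finite M" and sub: "\<forall>S\<in>F. S \<noteq> {} \<and> S \<subseteq> M"
    and deg: "\<forall>i\<in>M. card {S\<in>F. i \<in> S} \<le> r"
  shows "2 * card F \<le> (r + 1) * card M"
proof -
  have fin: "finite F"
    using assms by (meson Pow_iff finite_Pow_iff finite_subset subsetI)
  define F1 where "F1 = {S\<in>F. card S = 1}"
  have "F1 \<subseteq> (\<lambda>i. {i}) ` M"
    using sub by (auto simp: F1_def card_1_singleton_iff)
  then have F1_le: "card F1 \<le> card M"
    using \<open>finite M\<close> card_image_le card_mono finite_imageI le_trans by metis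
  have "2 * card F = (\<Sum>S\<in>F. 2)"
    by simp
  also have "\<dots> \<le> (\<Sum>S\<in>F. card S + (if card S = 1 then 1 else 0))"
  proof (rule sum_mono)
    fix S assume "S \<in> F"
    then have "card S \<noteq> 0"
      using sub \<open>finite M\<close> finite_subset by fastforce
    then show "2 \<le> card S + (if card S = 1 then 1 else 0)"
      by auto
  qed
  also have "\<dots> = (\<Sum>S\<in>F. card S) + card F1"
    using fin by (simp add: sum.distrib F1_def flip: sum.inter_filter)
  also have "(\<Sum>S\<in>F. card S) = (\<Sum>i\<in>M. card {S\<in>F. i \<in> S})"
    using \<open>finite M\<close> sub by (intro sum_card_eq_sum_degree) auto
  also have "\<dots> \<le> card M * r"
    using deg by (auto intro: sum_bounded_above[where K = r, simplified])
  finally show ?thesis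
    using F1_le by (simp add: algebra_simps)
qed

lemma good_gt_matrix_card_le:
  assumes "good_gt_matrix r m n A"
  shows "2 * n \<le> (r + 1) * m"
proof -
  let ?F = "col_support m A ` {..<n}"
  have inj: "inj_on (col_support m A) {..<n}"
    and nonempty: "\<forall>j<n. col_support m A j \<noteq> {}"
    and rows: "\<forall>i<m. card {j. j < n \<and> A i j} \<le> r"
    using assms by (auto simp: good_gt_matrix_iff)
  have "card {S\<in>?F. i \<in> S} \<le> r" if "i < m" for i
  proof -
    have "{S\<in>?F. i \<in> S} = col_support m A ` {j. j < n \<and> A i j}"
      using \<open>i < m\<close> by (auto simp: col_support_def)
    then have "card {S\<in>?F. i \<in> S} \<le> card {j. j < n \<and> A i j}"
      by (simp add: card_image_le)
    with rows \<open>i < m\<close> show ?thesis by (meson le_trans)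
  qed
  moreover have "\<forall>S\<in>?F. S \<noteq> {} \<and> S \<subseteq> {..<m}"
    using nonempty by (auto simp: col_support_def)
  ultimately have "2 * card ?F \<le> (r + 1) * card {..<m}"
    by (intro card_family_of_nonempty_subsets_le) auto
  then show ?thesis
    using inj by (simp add: card_image)
qed

lemma good_gt_matrix_of_family:
  assumes "finite F" and sub: "\<forall>S\<in>F. S \<noteq> {} \<and> S \<subseteq> {..<m}"
    and deg: "\<forall>i<m. card {S\<in>F. i \<in> S} \<le> r"
  shows "\<exists>A. good_gt_matrix r m (card F) A"
proof -
  obtain f where f: "bij_betw f {..<card F} F"
    using ex_bij_betw_nat_finite[OF \<open>finite F\<close>] by (auto simp: atLeast0LessThan)
  define A where "A i j \<longleftrightarrow> i \<in> f j" for i j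
  have col: "col_support m A j = f j" if "j < card F" for j
    using that f sub by (auto simp: A_def col_support_def bij_betw_def)
  have "inj_on (col_support m A) {..<card F}"
    using f col by (auto simp: bij_betw_def inj_on_def)
  moreover have "\<forall>j<card F. col_support m A j \<noteq> {}"
    using f sub col by (metis bij_betwE lessThan_iff)
  moreover have "card {j. j < card F \<and> A i j} \<le> r" if "i < m" for i
  proof -
    have "{j. j < card F \<and> A i j} \<subseteq> {..<card F}"
      by auto
    then have "card {j. j < card F \<and> A i j} = card (f ` {j. j < card F \<and> A i j})"
      using f by (metis bij_betw_def card_image inj_on_subset)
    also have "f ` {j. j < card F \<and> A i j} = {S\<in>F. i \<in> S}"
      using f by (auto simp: A_def bij_betw_def)
    finally show ?thesis
      using deg \<open>i < m\<close> by simp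
  qed
  ultimately show ?thesis
    by (auto simp: good_gt_matrix_iff)
qed

definition singletons_and_pairs :: "nat \<Rightarrow> nat set set" where
  "singletons_and_pairs r = {S. S \<subseteq> {..<r} \<and> (card S = 1 \<or> card S = 2)}"

lemma card_singletons_and_pairs: "card (singletons_and_pairs r) = r * (r + 1) div 2"
proof -
  have split: "singletons_and_pairs r =
      {S. S \<subseteq> {..<r} \<and> card S = 1} \<union> {S. S \<subseteq> {..<r} \<and> card S = 2}"
    by (auto simp: singletons_and_pairs_def)
  have fin: "finite {S. S \<subseteq> {..<r} \<and> P S}" for P
    by (rule finite_subset[of _ "Pow {..<r}"]) auto
  have "card (singletons_and_pairs r) =
      card {S. S \<subseteq> {..<r} \<and> card S = 1} + card {S. S \<subseteq> {..<r} \<and> card S = 2}"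
    unfolding split by (rule card_Un_disjoint[OF fin fin]) auto
  also have "\<dots> = (r choose 1) + (r choose 2)"
    by (simp only: n_subsets finite_lessThan card_lessThan)
  also have "\<dots> = r + r * (r - 1) div 2"
    by (simp add: choose_two)
  also have "\<dots> = r * (r + 1) div 2"
    by (cases r) auto
  finally show ?thesis .
qed

lemma card_singletons_and_pairs_containing:
  assumes "i < r"
  shows "card {S\<in>singletons_and_pairs r. i \<in> S} = r"
proof -
  have "{S\<in>singletons_and_pairs r. i \<in> S} = insert {i} ((\<lambda>k. {i, k}) ` ({..<r} - {i}))"
  proof (intro equalityI subsetI)
    fix S assume "S \<in> {S\<in>singletons_and_pairs r. i \<in> S}"
    then have "S \<subseteq> {..<r}" "i \<in> S" "card S = 1 \<or> card S = 2"
      by (auto simp: singletons_and_pairs_def)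
    then consider "S = {i}" | k where "k \<noteq> i" "S = {i, k}"
      by (auto simp: card_1_singleton_iff card_2_iff doubleton_eq_iff)
    then show "S \<in> insert {i} ((\<lambda>k. {i, k}) ` ({..<r} - {i}))"
      using \<open>S \<subseteq> {..<r}\<close> by cases auto
  qed (use assms in \<open>auto simp: singletons_and_pairs_def\<close>)
  moreover have "inj_on (\<lambda>k. {i, k}) ({..<r} - {i})"
    by (auto simp: inj_on_def doubleton_eq_iff)
  moreover have "{i} \<notin> (\<lambda>k. {i, k}) ` ({..<r} - {i})"
    by auto
  ultimately show ?thesis
    using assms by (simp add: card_image)
qed

theorem mainTheorem1:
  fixes r :: nat
  assumes "r \<ge> 1"
  shows "(\<exists>A. good_gt_matrix r r (r * (r + 1) div 2) A) \<and>
         (\<forall>m n A. good_gt_matrix r m n A \<longrightarrow> \<not> (real n / real m > (real r + 1) / 2))"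
proof (intro conjI allI impI notI)
  have "\<forall>S\<in>singletons_and_pairs r. S \<noteq> {} \<and> S \<subseteq> {..<r}"
    by (auto simp: singletons_and_pairs_def)
  moreover have "finite (singletons_and_pairs r)"
    by (simp add: singletons_and_pairs_def)
  ultimately show "\<exists>A. good_gt_matrix r r (r * (r + 1) div 2) A"
    using good_gt_matrix_of_family[of "singletons_and_pairs r" r r]
    by (simp add: card_singletons_and_pairs card_singletons_and_pairs_containing)
next
  fix m n A
  assume "good_gt_matrix r m n A" and ratio: "real n / real m > (real r + 1) / 2"
  then have "real (2 * n) \<le> real ((r + 1) * m)"
    by (simp only: of_nat_le_iff good_gt_matrix_card_le)
  then have "2 * real n \<le> (real r + 1) * real m"
    by (simp add: algebra_simps)
  moreover have "m > 0"
    using ratio by (cases m) auto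
  ultimately show False
    using ratio by (simp add: field_simps)
qed

end
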